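(* $\mathsf{SetEquality}\in\mathsf{dAM}[O(\log n)]$. Here, for a fixed constant $c\in\mathbb N$, in $\mathsf{SetEquality}$ each node $u$ of the $n$-node communication graph holds two lists $a_{u,1},\dots,a_{u,\ell}$ and $b_{u,1},\dots,b_{u,\ell}$ with $\ell\le n$ and all $a_{u,i},b_{u,i}\in\{0,1\}^{c\log n}$; the instance is in the language iff the multisets $\mathcal A=\{a_{u,i}:u\in V,i\in[\ell]\}$ and $\mathcal B=\{b_{u,i}:u\in V,i\in[\ell]\}$ are equal (as multisets).
   Context: Distributed interactive proofs (model). An instance consists of a connected communication graph $G=(V,E)$ with $|V|=n$, where each node has a unique identifier of $O(\log n)$ bits, knows $n$, knows its own identifier, its local input (if the problem has local inputs), and the identifiers of its neighbours (with an arbitrary port numbering of its incident edges). A prover, who sees the whole instance, interacts with all nodes in $r$ alternating messages. In a verifier (node) message each node independently samples fresh uniformly random bits and sends them to the prover (public coins). In a prover message the prover sends each node a string. Nodes may additionally exchange the strings they received from the prover with their neighbours in $G$. At the end each node deterministically accepts or rejects as a function of its local information, its own random bits, the strings it received from the prover and those its neighbours received; the instance is accepted iff all nodes accept. The proof size is the maximum number of bits in any single message between the prover and any node. A language $\mathcal L$ (set of instances) is in $\mathsf{dIP}[r,\ell]$ if there is an $r$-message protocol of proof size $\ell=\ell(n)$ such that (completeness) for every instance in $\mathcal L$ some prover makes all nodes accept with probability $>2/3$, and (soundness) for every instance not in $\mathcal L$ and every prover, all nodes accept with probability $<1/3$ (probabilities over the nodes' coins). $\mathsf{dAM}[\ell]$,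 $\mathsf{dMAM}[\ell]$, $\mathsf{dAMAM}[\ell]$, $\mathsf{dMAMAM}[\ell]$ denote the cases of 2, 3, 4, 5 messages, where the letters indicate who sends each message in order (A = nodes send random coins, M = prover). *)

theory Defs
  imports Complex_Main "HOL-Library.Multiset" "HOL-Library.FuncSet"
begin

text \<open>
Vertices are identified with their unique identifiers (natural numbers).
An instance is a triple (V, E, x): a finite vertex set V of size n whose
identifiers lie in {0..<n^kappa} (i.e. O(log n) bits), a symmetric irreflexive
edge relation E on V making the graph connected, and local inputs x.
\<close>

type_synonym 'i inst = "nat set \<times> (nat \<Rightarrow> nat \<Rightarrow> bool) \<times> (nat \<Rightarrow> 'i)"

definition clog :: "nat \<Rightarrow> nat" where
  "clog n = nat \<lceil>log 2 (real n)\<rceil>"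

definition wf_graph :: "nat \<Rightarrow> nat set \<Rightarrow> (nat \<Rightarrow> nat \<Rightarrow> bool) \<Rightarrow> bool" where
  "wf_graph \<kappa> V E \<longleftrightarrow>
     finite V \<and> V \<noteq> {} \<and> V \<subseteq> {..< card V ^ \<kappa>} \<and>
     (\<forall>u w. E u w \<longrightarrow> u \<in> V \<and> w \<in> V) \<and>
     (\<forall>u w. E u w \<longrightarrow> E w u) \<and> (\<forall>u. \<not> E u u) \<and>
     (\<forall>u\<in>V. \<forall>w\<in>V. E\<^sup>*\<^sup>* u w)"

definition coins :: "nat set \<Rightarrow> nat \<Rightarrow> (nat \<Rightarrow> bool list) set" where
  "coins V k = PiE V (\<lambda>_. {cs. length cs = k})"

text \<open>A decision function: n, own id, own input, own coins, own prover string,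
  partial map from neighbour ids to the strings they received from the prover.\<close>
type_synonym 'i decider =
  "nat \<Rightarrow> nat \<Rightarrow> 'i \<Rightarrow> bool list \<Rightarrow> bool list \<Rightarrow> (nat \<Rightarrow> bool list option) \<Rightarrow> bool"

text \<open>A prover: maps the nodes' coins to the strings sent to each node.
  (The prover sees the whole instance; it is chosen per instance.)\<close>
type_synonym prover = "(nat \<Rightarrow> bool list) \<Rightarrow> nat \<Rightarrow> bool list"

definition all_accept ::
  "nat set \<Rightarrow> (nat \<Rightarrow> nat \<Rightarrow> bool) \<Rightarrow> (nat \<Rightarrow> 'i) \<Rightarrow> 'i decider \<Rightarrow> prover
     \<Rightarrow> (nat \<Rightarrow> bool list) \<Rightarrow> bool" where
  "all_accept V E x D P \<rho> \<longleftrightarrow>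
     (\<forall>u\<in>V. D (card V) u (x u) (\<rho> u) (P \<rho> u)
               (\<lambda>w. if w \<in> V \<and> E u w then Some (P \<rho> w) else None))"

definition acc_prob ::
  "nat set \<Rightarrow> (nat \<Rightarrow> nat \<Rightarrow> bool) \<Rightarrow> (nat \<Rightarrow> 'i) \<Rightarrow> (nat \<Rightarrow> nat) \<Rightarrow> 'i decider
     \<Rightarrow> prover \<Rightarrow> real" where
  "acc_prob V E x r D P =
     real (card {\<rho> \<in> coins V (r (card V)). all_accept V E x D P \<rho>})
       / real (card (coins V (r (card V))))"

definition prover_size_ok :: "nat set \<Rightarrow> (nat \<Rightarrow> nat) \<Rightarrow> (nat \<Rightarrow> nat) \<Rightarrow> prover \<Rightarrow> bool" where
  "prover_size_ok V r L P \<longleftrightarrow>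
     (\<forall>\<rho>\<in>coins V (r (card V)). \<forall>u\<in>V. length (P \<rho> u) \<le> L (card V))"

definition in_dAM :: "'i inst set \<Rightarrow> 'i inst set \<Rightarrow> (nat \<Rightarrow> nat) \<Rightarrow> bool" where
  "in_dAM Dom Lang L \<longleftrightarrow>
     (\<exists>(r :: nat \<Rightarrow> nat) (D :: 'i decider).
        (\<forall>n. r n \<le> L n) \<and>
        (\<forall>(V, E, x) \<in> Lang. \<exists>P. prover_size_ok V r L P \<and> acc_prob V E x r D P > 2/3) \<and>
        (\<forall>(V, E, x) \<in> Dom - Lang. \<forall>P. prover_size_ok V r L P \<longrightarrow> acc_prob V E x r D P < 1/3))"

definition seteq_dom :: "nat \<Rightarrow> nat \<Rightarrow> (bool list list \<times> bool list list) inst set" where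
  "seteq_dom c \<kappa> = {(V, E, x). wf_graph \<kappa> V E \<and>
     (\<exists>l \<le> card V. \<forall>u\<in>V. length (fst (x u)) = l \<and> length (snd (x u)) = l \<and>
        (\<forall>s \<in> set (fst (x u)) \<union> set (snd (x u)). length s = c * clog (card V)))}"

definition seteq_lang :: "nat \<Rightarrow> nat \<Rightarrow> (bool list list \<times> bool list list) inst set" where
  "seteq_lang c \<kappa> = {(V, E, x) \<in> seteq_dom c \<kappa>.
     (\<Sum>u\<in>V. mset (fst (x u))) = (\<Sum>u\<in>V. mset (snd (x u)))}"

end

theory Submission
  imports Defs "HOL-Number_Theory.Number_Theory"
begin

text \<open>
  Every node draws \<open>r = O(log n)\<close> coins, read as a number below a prime \<open>p \<ge> 2^r\<close> of
  \<open>O(log n)\<close> bits.  The honest prover picks a root \<open>v\<^sub>0\<close> and a spanning tree towards it,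
  announces the root's coins \<open>z\<close> to every node, and labels each node with its parent, its
  depth and the sum modulo \<open>p\<close> over its subtree of the local terms
  \<open>\<Sum>\<^sub>i z^a\<^sub>u\<^sub>,\<^sub>i - \<Sum>\<^sub>i z^b\<^sub>u\<^sub>,\<^sub>i\<close>; the nodes check
  these labels against their neighbours' and the root checks that the total vanishes.
  Accepting labels force \<open>\<Sum>\<^sub>a z^a - \<Sum>\<^sub>b z^b \<equiv> 0 (mod p)\<close> at the coins \<open>z\<close> of some
  node.  If the multisets differ, this polynomial of degree below \<open>K = 2^(c\<lceil>log n\<rceil>)\<close> has a
  coefficient that is nonzero and smaller than \<open>p\<close> in absolute value, so it has at most \<open>K\<close>
  roots modulo \<open>p\<close>, and a union bound over the \<open>n\<close> possible roots of the tree bounds the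
  acceptance probability by \<open>n K / 2^r < 1/3\<close>.
\<close>

section \<open>A prime in every interval [2^t, 2^(4t)]\<close>

lemma card_prime_power_divisors:
  assumes "prime (p::nat)" and "x \<noteq> 0" and "multiplicity p x \<le> N"
  shows "card {i\<in>{1..N}. p ^ i dvd x} = multiplicity p x"
proof -
  have "p ^ i dvd x \<longleftrightarrow> i \<le> multiplicity p x" for i
    using power_dvd_iff_le_multiplicity[OF assms(2), of p] assms(1) not_prime_unit by blast
  then have "{i\<in>{1..N}. p ^ i dvd x} = {1..multiplicity p x}"
    using assms(3) by fastforce
  then show ?thesis by simp
qed

lemma multiplicity_fact:
  assumes p: "prime (p::nat)"
  shows "multiplicity p (fact n) = (\<Sum>i\<in>{1..n}. n div p ^ i)"
proof (induction n)
  case 0 then show ?case by simp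
next
  case (Suc n)
  have p1: "Suc 0 < p" using prime_gt_1_nat[OF p] by simp
  have "multiplicity p (Suc n) < p ^ multiplicity p (Suc n)" by (rule power_gt_expt[OF p1])
  also have "\<dots> \<le> Suc n" by (rule dvd_imp_le[OF multiplicity_dvd]) simp
  finally have small: "multiplicity p (Suc n) \<le> Suc n" by simp
  have "(fact (Suc n) :: nat) = Suc n * fact n" by simp
  then have "multiplicity p (fact (Suc n) :: nat) = multiplicity p (Suc n) + multiplicity p (fact n :: nat)"
    using prime_elem_multiplicity_mult_distrib[of p "Suc n" "fact n"] p by (simp del: fact_Suc)
  also have "multiplicity p (Suc n) = (\<Sum>i\<in>{1..Suc n}. if p ^ i dvd Suc n then 1 else 0)"
    using card_prime_power_divisors[OF p _ small]
      sum.inter_filter[of "{1..Suc n}" "\<lambda>_. 1::nat" "\<lambda>i. p ^ i dvd Suc n"] by simp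
  also have "multiplicity p (fact n :: nat) = (\<Sum>i\<in>{1..Suc n}. n div p ^ i)"
    using Suc.IH power_gt_expt[OF p1, of "Suc n"] by (simp add: sum.cl_ivl_Suc)
  also have "(\<Sum>i\<in>{1..Suc n}. if p ^ i dvd Suc n then 1 else 0) + (\<Sum>i\<in>{1..Suc n}. n div p ^ i)
      = (\<Sum>i\<in>{1..Suc n}. Suc n div p ^ i)"
    unfolding sum.distrib[symmetric] by (intro sum.cong) (auto simp: div_Suc dvd_eq_mod_eq_0)
  finally show ?case .
qed

lemma double_div_bounds:
  fixes m q :: nat
  shows "2 * (m div q) \<le> (2 * m) div q" and "(2 * m) div q \<le> 2 * (m div q) + 1"
proof -
  consider "q = 0" | "0 < q" by blast
  then show "2 * (m div q) \<le> (2 * m) div q"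
  proof cases
    case 2
    have "2 * (m div q) * q \<le> 2 * m" using div_times_less_eq_dividend[of m q] by (simp add: mult.assoc)
    then show ?thesis using 2 by (simp add: less_eq_div_iff_mult_less_eq)
  qed simp
  show "(2 * m) div q \<le> 2 * (m div q) + 1"
  proof (cases "q = 0")
    case False
    have "2 * m = 2 * (m div q) * q + 2 * (m mod q)"
      using div_mult_mod_eq[of m q] by (metis add_mult_distrib2 mult.assoc)
    moreover have "2 * (m mod q) < 2 * q" using False by simp
    ultimately have "2 * m < (2 * (m div q) + 2) * q" by (simp add: algebra_simps)
    then have "2 * m div q < 2 * (m div q) + 2" using False by (simp only: div_less_iff_less_mult)
    then show ?thesis by simp
  qed simp
qed

lemma multiplicity_central_binomial:
  assumes p: "prime (p::nat)"
  shows "multiplicity p ((2*m) choose m) = (\<Sum>i\<in>{1..2*m}. (2*m) div p ^ i - 2 * (m div p ^ i))"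
proof -
  have p1: "Suc 0 < p" using prime_gt_1_nat[OF p] by simp
  have "(fact (2*m) :: nat) = ((2*m) choose m) * (fact m * fact m)"
    using binomial_fact_lemma[of m "2*m"] by (simp add: algebra_simps)
  then have fact_2m: "multiplicity p (fact (2*m) :: nat)
      = multiplicity p ((2*m) choose m) + 2 * multiplicity p (fact m :: nat)"
    using p by (simp add: prime_elem_multiplicity_mult_distrib)
  have "m div p ^ i = 0" if "m < i" for i
    using power_gt_expt[OF p1, of i] that by simp
  then have "(\<Sum>i\<in>{1..m}. m div p ^ i) = (\<Sum>i\<in>{1..2*m}. m div p ^ i)"
    by (intro sum.mono_neutral_left) auto
  with fact_2m
  have "multiplicity p ((2*m) choose m)
      = (\<Sum>i\<in>{1..2*m}. (2*m) div p ^ i) - 2 * (\<Sum>i\<in>{1..2*m}. m div p ^ i)"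
    unfolding multiplicity_fact[OF p] by linarith
  then show ?thesis by (simp add: sum_subtractf_nat double_div_bounds sum_distrib_left)
qed

lemma prime_power_multiplicity_central_binomial_le:
  assumes p: "prime (p::nat)" and m: "0 < m"
  shows "p ^ multiplicity p ((2*m) choose m) \<le> 2*m"
proof (rule ccontr)
  define v where "v = multiplicity p ((2*m) choose m)"
  define t where "t i = (2*m) div p ^ i - 2 * (m div p ^ i)" for i
  assume "\<not> p ^ multiplicity p ((2*m) choose m) \<le> 2*m"
  then have big: "2*m < p ^ v" unfolding v_def by simp
  then have "v \<noteq> 0" using m by (cases v) auto
  have t_zero: "t i = 0" if "v \<le> i" for i
  proof -
    have "p ^ v \<le> p ^ i" using that prime_gt_0_nat[OF p] by (simp add: power_increasing)
    then show ?thesis using big unfolding t_def by simp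
  qed
  have "v = (\<Sum>i\<in>{1..2*m}. t i)"
    unfolding v_def t_def by (rule multiplicity_central_binomial[OF p])
  also have "\<dots> = (\<Sum>i\<in>{1..2*m} \<inter> {..<v}. t i)"
    by (intro sum.mono_neutral_right) (auto simp: not_less t_zero)
  also have "\<dots> \<le> card ({1..2*m} \<inter> {..<v})"
  proof -
    have "t i \<le> 1" for i
      unfolding t_def using double_div_bounds(2)[of m "p ^ i"] by linarith
    then show ?thesis using sum_mono[of _ t "\<lambda>_. 1"] by fastforce
  qed
  also have "\<dots> \<le> card {1..<v}" by (intro card_mono) auto
  finally show False using \<open>v \<noteq> 0\<close> by simp
qed

lemma central_binomial_le_power_prime_count:
  assumes m: "0 < m"
  shows "(2*m) choose m \<le> (2*m) ^ card {p. prime p \<and> p \<le> 2*m}"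
proof -
  define B where "B = (2*m) choose m"
  have B0: "B \<noteq> 0" unfolding B_def by simp
  have "prime_factors B \<subseteq> {p. prime p \<and> p \<le> 2*m}"
  proof
    fix p assume pB: "p \<in> prime_factors B"
    have "B dvd fact (2*m)" unfolding B_def
      using binomial_fact_lemma[of m "2*m"] by (metis dvd_triv_right le_add2 mult_2)
    then have "p dvd fact (2*m)" using pB by (auto intro: dvd_trans)
    then show "p \<in> {p. prime p \<and> p \<le> 2*m}" using prime_dvd_fact_iff pB by auto
  qed
  moreover have "B = (\<Prod>p\<in>prime_factors B. p ^ multiplicity p B)"
    using prod_prime_factors[OF B0] by simp
  moreover have "\<dots> \<le> (\<Prod>p\<in>prime_factors B. 2*m)"
    by (intro prod_mono) (auto simp: B_def intro: prime_power_multiplicity_central_binomial_le[OF _ m])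
  ultimately have "B \<le> (2*m) ^ card (prime_factors B)" by simp
  also have "\<dots> \<le> (2*m) ^ card {p. prime p \<and> p \<le> 2*m}"
    using m by (intro power_increasing card_mono \<open>prime_factors B \<subseteq> _\<close>) auto
  finally show ?thesis unfolding B_def .
qed

lemma four_mult_less_two_power:
  assumes t: "1 \<le> t"
  shows "4*t*(2^t + 1) < (2::nat) ^ (4*t)"
proof (cases "t = 1")
  case False
  then have "2 \<le> t" using t by simp
  have "4*t*(2^t + 1) \<le> 4*2^t*(2*2^t)" using less_exp[of t] by (intro mult_mono) auto
  also have "\<dots> < 16 * (2^t * 2^t)" by simp
  also have "\<dots> \<le> (2^t * 2^t) * (2^t * 2^t)"
    using power_increasing[OF \<open>2 \<le> t\<close>, of "2::nat"] mult_mono[of 4 "2^t" 4 "2^t::nat"]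
    by (intro mult_right_mono) auto
  also have "\<dots> = 2 ^ (4*t)" by (simp flip: power_add)
  finally show ?thesis .
qed simp

text \<open>Erdos' argument for Bertrand's postulate, in a weak form: without primes in
  \<open>[2^t, 2m]\<close>, \<open>4^m \<le> 2m \<cdot> (2m choose m) \<le> (2m)^(\<pi>(2m) + 1)\<close> fails for \<open>2m = 2^(4t)\<close>.\<close>
lemma prime_between_powers_of_two:
  assumes t: "1 \<le> t"
  shows "\<exists>p::nat. prime p \<and> 2 ^ t \<le> p \<and> p \<le> 2 ^ (4*t)"
proof (rule ccontr)
  assume none: "\<not> ?thesis"
  define m where "m = (2::nat) ^ (4*t - 1)"
  have m0: "0 < m" unfolding m_def by simp
  have N: "2*m = 2 ^ (4*t)" unfolding m_def using t by (cases t) (simp_all add: power_add)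
  have "{p. prime p \<and> p \<le> 2*m} \<subseteq> {..<2^t}" using none N by (auto simp: not_le)
  then have primes: "card {p. prime p \<and> p \<le> 2*m} \<le> 2 ^ t"
    using card_mono[of "{..<2^t}"] by fastforce
  have "2 ^ (2*m) = (4::nat) ^ m" by (simp add: power_mult)
  also have "\<dots> \<le> ((2*m) choose m) * (2*m)"
  proof -
    have "real (4 ^ m) \<le> real ((2*m) choose m) * (2 * real m)"
      using central_binomial_lower_bound[OF m0] m0 by (simp add: field_simps)
    then have "real (4 ^ m) \<le> real (((2*m) choose m) * (2*m))" by simp
    then show ?thesis by (simp only: of_nat_le_iff)
  qed
  also have "\<dots> \<le> (2*m) ^ card {p. prime p \<and> p \<le> 2*m} * (2*m)"
    by (intro mult_right_mono central_binomial_le_power_prime_count[OF m0]) auto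
  also have "\<dots> \<le> (2*m) ^ (2^t) * (2*m)"
    using m0 by (intro mult_right_mono power_increasing primes) auto
  also have "\<dots> = 2 ^ (4*t*(2^t + 1))"
    unfolding N by (simp add: power_mult[symmetric] power_add[symmetric] algebra_simps)
  finally have "2*m \<le> 4*t*(2^t + 1)" by simp
  moreover have "4*t*(2^t + 1) < (2::nat) ^ (4*t)" by (rule four_mult_less_two_power[OF t])
  ultimately show False using N by simp
qed

section \<open>Roots of a polynomial modulo a prime\<close>

lemma (in UP_ring) coeff_finsum_monom:
  assumes "a \<in> A \<rightarrow> carrier R" and "finite A"
  shows "coeff P (\<Oplus>\<^bsub>P\<^esub>v\<in>A. monom P (a v) v) k = (if k \<in> A then a k else \<zero>)"
proof -
  have "coeff P (\<Oplus>\<^bsub>P\<^esub>v\<in>A. monom P (a v) v) k = (\<Oplus>v\<in>A. coeff P (monom P (a v) v) k)"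
    using assms by (intro coeff_finsum) (auto simp: Pi_iff)
  also have "\<dots> = (\<Oplus>v\<in>A. if k = v then a v else \<zero>)"
    using assms by (intro R.finsum_cong') (auto simp: Pi_iff)
  also have "\<dots> = (if k \<in> A then a k else \<zero>)"
  proof (cases "k \<in> A")
    case False
    then have "(\<Oplus>v\<in>A. if k = v then a v else \<zero>) = (\<Oplus>v\<in>A. \<zero>)" by (intro R.finsum_cong') auto
    then show ?thesis using False by simp
  qed (use assms in \<open>simp add: R.finsum_singleton\<close>)
  finally show ?thesis .
qed

lemma (in UP_pre_univ_prop) eval_finsum_monom:
  assumes "a \<in> A \<rightarrow> carrier R" and s: "s \<in> carrier S"
  shows "eval R S h s (\<Oplus>\<^bsub>P\<^esub>v\<in>A. monom P (a v) v) = (\<Oplus>\<^bsub>S\<^esub>v\<in>A. h (a v) \<otimes>\<^bsub>S\<^esub> s [^]\<^bsub>S\<^esub> v)"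
proof -
  interpret eval: ring_hom_ring P S "eval R S h s"
    by (rule ring_hom_ringI2[OF UP_ring S.ring_axioms eval_ring_hom[OF s]])
  show ?thesis
    using assms by (auto simp: Pi_def eval_monom intro: S.finsum_cong')
qed

lemma card_roots_mod_prime:
  fixes d :: "nat \<Rightarrow> int"
  assumes p: "prime p" and "v\<^sub>0 < K" and "d v\<^sub>0 mod int p \<noteq> 0"
  shows "card {t\<in>{..<p}. (\<Sum>v<K. d v * int t ^ v) mod int p = 0} \<le> K"
proof -
  define R where "R = residue_ring (int p)"
  from p interpret residues_prime p R
    by unfold_locales (simp_all add: R_def)
  interpret UP: UP_domain R "UP R" by unfold_locales
  interpret UP: UP_pre_univ_prop R R id "UP R" by unfold_locales simp
  define f where "f = (\<Oplus>\<^bsub>UP R\<^esub>v\<in>{..<K}. monom (UP R) (d v mod int p) v)"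
  have coeffs: "(\<lambda>v. d v mod int p) \<in> {..<K} \<rightarrow> carrier R"
    using prime_gt_1_nat[OF p] by (auto simp: res_carrier_eq)
  have "(\<lambda>v. monom (UP R) (d v mod int p) v) \<in> {..<K} \<rightarrow> carrier (UP R)" using coeffs by auto
  then have f: "f \<in> carrier (UP R)" unfolding f_def by simp
  have "coeff (UP R) f v\<^sub>0 \<noteq> \<zero>\<^bsub>R\<^esub>"
    unfolding f_def using assms(2,3) by (simp add: UP.coeff_finsum_monom[OF coeffs] zero_cong)
  then have "f \<noteq> \<zero>\<^bsub>UP R\<^esub>" by auto
  then have roots: "finite {a \<in> carrier R. eval R R id a f = \<zero>\<^bsub>R\<^esub>} \<and>
      card {a \<in> carrier R. eval R R id a f = \<zero>\<^bsub>R\<^esub>} \<le> deg R f"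
    by (intro UP.roots_bound[OF f]) (simp_all add: res_carrier_eq)
  have "deg R f \<le> K"
    using f by (intro UP.deg_aboveI) (simp_all add: f_def UP.coeff_finsum_monom[OF coeffs])
  have "eval R R id (int t) f = (\<Sum>v<K. d v * int t ^ v) mod int p" if "t < p" for t
  proof -
    have "eval R R id (int t) f = (\<Oplus>\<^bsub>R\<^esub>v\<in>{..<K}. (d v mod int p) \<otimes>\<^bsub>R\<^esub> int t [^]\<^bsub>R\<^esub> v)"
      unfolding f_def using that coeffs by (simp add: UP.eval_finsum_monom res_carrier_eq)
    also have "\<dots> = (\<Oplus>\<^bsub>R\<^esub>v\<in>{..<K}. (d v * int t ^ v) mod int p)"
    proof (intro finsum_cong')
      fix v
      have "int t = int t mod int p" using that by simp
      then show "(d v mod int p) \<otimes>\<^bsub>R\<^esub> int t [^]\<^bsub>R\<^esub> v = (d v * int t ^ v) mod int p"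
        by (metis pow_cong mult_cong)
    qed auto
    also have "\<dots> = (\<Sum>v<K. d v * int t ^ v) mod int p" by (rule sum_cong) simp
    finally show ?thesis .
  qed
  then have "int ` {t\<in>{..<p}. (\<Sum>v<K. d v * int t ^ v) mod int p = 0}
      \<subseteq> {a \<in> carrier R. eval R R id a f = \<zero>\<^bsub>R\<^esub>}"
    by (auto simp: res_carrier_eq zero_cong)
  then have "card {t\<in>{..<p}. (\<Sum>v<K. d v * int t ^ v) mod int p = 0}
      \<le> card {a \<in> carrier R. eval R R id a f = \<zero>\<^bsub>R\<^esub>}"
    using roots card_image[of int] by (metis (no_types, lifting) card_mono inj_on_of_nat)
  with roots \<open>deg R f \<le> K\<close> show ?thesis by linarith
qed

section \<open>Bit strings as numbers\<close>

fun bits_val :: "bool list \<Rightarrow> nat" where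
  "bits_val [] = 0"
| "bits_val (b # bs) = of_bool b + 2 * bits_val bs"

fun bits_of :: "nat \<Rightarrow> nat \<Rightarrow> bool list" where
  "bits_of 0 x = []"
| "bits_of (Suc w) x = odd x # bits_of w (x div 2)"

lemma length_bits_of [simp]: "length (bits_of w x) = w"
  by (induction w arbitrary: x) auto

lemma bits_val_bits_of: "bits_val (bits_of w x) = x mod 2 ^ w"
proof (induction w arbitrary: x)
  case (Suc w)
  have "x mod 2 ^ Suc w = x mod 2 + 2 * (x div 2 mod 2 ^ w)"
    by (simp add: mod_mult2_eq mult.commute)
  then show ?case using Suc by (simp add: odd_iff_mod_2_eq_one)
qed simp

lemma bits_val_less: "bits_val bs < 2 ^ length bs"
  by (induction bs) auto

lemma bits_of_bits_val: "bits_of (length bs) (bits_val bs) = bs"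
  by (induction bs) auto

lemma inj_on_bits_val: "inj_on bits_val {bs. length bs = r}"
  by (rule inj_on_inverseI[where g = "bits_of r"]) (metis bits_of_bits_val mem_Collect_eq)

definition bits_field :: "bool list \<Rightarrow> nat \<Rightarrow> nat \<Rightarrow> nat" where
  "bits_field str off w = bits_val (take w (drop off str))"

lemma bits_field_append:
  "length xs = off \<Longrightarrow> x < 2 ^ w \<Longrightarrow> bits_field (xs @ bits_of w x @ ys) off w = x"
  unfolding bits_field_def by (simp add: bits_val_bits_of)

section \<open>Counting coins\<close>

lemma card_bool_lists: "card {cs :: bool list. length cs = r} = 2 ^ r"
  using card_lists_length_eq[of "UNIV :: bool set" r] by simp

lemma card_coins: "finite V \<Longrightarrow> card (coins V r) = 2 ^ (r * card V)"
  unfolding coins_def by (simp add: card_PiE card_bool_lists power_mult)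

lemma finite_coins: "finite V \<Longrightarrow> finite (coins V r)"
  unfolding coins_def using finite_lists_length_eq[of "UNIV :: bool set" r]
  by (intro finite_PiE) auto

lemma card_coins_value_in:
  assumes V: "finite V" and v: "v \<in> V" and T: "finite T"
  shows "card {\<rho> \<in> coins V r. bits_val (\<rho> v) \<in> T} * 2 ^ r \<le> card T * card (coins V r)"
proof -
  define S where "S u = (if u = v then {cs. length cs = r \<and> bits_val cs \<in> T} else {cs. length cs = r})" for u
  obtain k where k: "card V = Suc k" using V v by (metis card_Suc_Diff1)
  have "{\<rho> \<in> coins V r. bits_val (\<rho> v) \<in> T} = PiE V S"
    unfolding coins_def S_def using v by (auto simp: PiE_def Pi_def)
  then have "card {\<rho> \<in> coins V r. bits_val (\<rho> v) \<in> T} = card (S v) * (\<Prod>u\<in>V - {v}. card (S u))"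
    using V v by (simp add: card_PiE prod.remove)
  also have "(\<Prod>u\<in>V - {v}. card (S u)) = 2 ^ (r * k)"
    using V v k by (simp add: S_def card_bool_lists power_mult card_Diff_singleton)
  finally have card_eq: "card {\<rho> \<in> coins V r. bits_val (\<rho> v) \<in> T} = card (S v) * 2 ^ (r * k)" .
  have "card (S v) = card (bits_val ` S v)"
    by (rule card_image[symmetric], rule inj_on_subset[OF inj_on_bits_val[of r]]) (auto simp: S_def)
  also have "\<dots> \<le> card T" using T by (intro card_mono) (auto simp: S_def)
  finally have "card (S v) * (2 ^ (r * k) * 2 ^ r) \<le> card T * (2 ^ (r * k) * 2 ^ r)"
    by (rule mult_right_mono) simp
  moreover have "card (coins V r) = 2 ^ (r * k) * 2 ^ r"
    by (simp add: card_coins[OF V] k power_add algebra_simps)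
  ultimately show ?thesis unfolding card_eq by (simp add: mult.assoc)
qed

lemma card_coins_some_value_in:
  assumes V: "finite V" and T: "finite T"
  shows "card {\<rho> \<in> coins V r. \<exists>v\<in>V. bits_val (\<rho> v) \<in> T} * 2 ^ r \<le> card V * card T * card (coins V r)"
proof -
  have "{\<rho> \<in> coins V r. \<exists>v\<in>V. bits_val (\<rho> v) \<in> T} = (\<Union>v\<in>V. {\<rho> \<in> coins V r. bits_val (\<rho> v) \<in> T})"
    by blast
  then have union: "card {\<rho> \<in> coins V r. \<exists>v\<in>V. bits_val (\<rho> v) \<in> T}
      \<le> (\<Sum>v\<in>V. card {\<rho> \<in> coins V r. bits_val (\<rho> v) \<in> T})"
    using card_UN_le[OF V] by simp
  have "card {\<rho> \<in> coins V r. \<exists>v\<in>V. bits_val (\<rho> v) \<in> T} * 2 ^ r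
      \<le> (\<Sum>v\<in>V. card {\<rho> \<in> coins V r. bits_val (\<rho> v) \<in> T} * 2 ^ r)"
    using mult_le_mono1[OF union, of "2 ^ r"] by (simp add: sum_distrib_right)
  also have "\<dots> \<le> (\<Sum>v\<in>V. card T * card (coins V r))"
    by (intro sum_mono card_coins_value_in[OF V _ T])
  finally show ?thesis by simp
qed

section \<open>Multisets and power sums\<close>

lemma image_mset_inj_on_eq:
  assumes "inj_on f (set_mset A \<union> set_mset B)" and "image_mset f A = image_mset f B"
  shows "A = B"
proof -
  obtain C where "A = B + C" and "image_mset f C = {#}"
    using image_mset_eq_image_mset_plusD[of f A B "{#}"] assms by force
  then show ?thesis by simp
qed

lemma count_diff_mod_nonzero:
  fixes A B :: "'a multiset" and q :: int
  assumes "A \<noteq> B" and "int (size A) < q" and "int (size B) < q"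
  shows "\<exists>v. v \<in># A + B \<and> (int (count A v) - int (count B v)) mod q \<noteq> 0"
proof -
  obtain v where v: "count A v \<noteq> count B v" using assms(1) by (auto simp: multiset_eq_iff)
  define d where "d = int (count A v) - int (count B v)"
  have "v \<in># A + B" using v by (simp flip: count_greater_zero_iff) linarith
  moreover have "d mod q \<noteq> 0"
  proof
    assume "d mod q = 0"
    then have "q dvd \<bar>d\<bar>" by auto
    moreover have "d \<noteq> 0" using v unfolding d_def by simp
    ultimately have "q \<le> \<bar>d\<bar>" by (intro zdvd_imp_le) auto
    moreover have "\<bar>d\<bar> < q"
      using count_le_size[of A v] count_le_size[of B v] assms(2,3) unfolding d_def by linarith
    ultimately show False by simp
  qed
  ultimately show ?thesis unfolding d_def by blast
qed

definition power_sum :: "nat multiset \<Rightarrow> int \<Rightarrow> int" where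
  "power_sum M z = (\<Sum>v\<in>#M. z ^ v)"

lemma power_sum_add [simp]: "power_sum (M + N) z = power_sum M z + power_sum N z"
  by (simp add: power_sum_def)

lemma power_sum_eq_poly:
  assumes "set_mset M \<subseteq> {..<K}"
  shows "power_sum M z = (\<Sum>v<K. int (count M v) * z ^ v)"
  using assms
proof (induction M)
  case (add x M)
  then have "x < K" by simp
  have "(\<Sum>v<K. int (count (add_mset x M) v) * z ^ v)
      = (\<Sum>v<K. int (count M v) * z ^ v + (if v = x then z ^ v else 0))"
    by (intro sum.cong) (auto simp: algebra_simps)
  also have "\<dots> = (\<Sum>v<K. int (count M v) * z ^ v) + z ^ x"
    using \<open>x < K\<close> by (simp add: sum.distrib)
  finally show ?case using add by (simp add: power_sum_def)
qed (simp add: power_sum_def)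

definition power_sum_roots :: "nat \<Rightarrow> nat multiset \<Rightarrow> nat multiset \<Rightarrow> nat set" where
  "power_sum_roots p A B = {t\<in>{..<p}. (power_sum A (int t) - power_sum B (int t)) mod int p = 0}"

lemma card_power_sum_roots:
  assumes p: "prime p" and "A \<noteq> B" and "size A < p" and "size B < p" and AB: "set_mset (A + B) \<subseteq> {..<K}"
  shows "card (power_sum_roots p A B) \<le> K"
proof -
  define d where "d v = int (count A v) - int (count B v)" for v
  obtain v\<^sub>0 where "v\<^sub>0 \<in># A + B" and v\<^sub>0: "d v\<^sub>0 mod int p \<noteq> 0"
    using count_diff_mod_nonzero[of A B "int p"] assms(2-4) unfolding d_def by auto
  then have "v\<^sub>0 < K" using AB by auto
  have "power_sum A z - power_sum B z = (\<Sum>v<K. d v * z ^ v)" for z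
    using AB power_sum_eq_poly[of A K z] power_sum_eq_poly[of B K z]
    by (simp add: d_def sum_subtractf left_diff_distrib)
  then show ?thesis
    using card_roots_mod_prime[where d = d, OF p \<open>v\<^sub>0 < K\<close> v\<^sub>0] by (simp add: power_sum_roots_def)
qed

section \<open>Rooted spanning trees\<close>

lemma rtranclp_eq_if_edges_eq:
  assumes "E\<^sup>*\<^sup>* u w" and "\<And>a b. E a b \<Longrightarrow> F a = F b"
  shows "F u = F w"
  using assms(1) by induction (auto dest: assms(2))

lemma ex_root_if_parents_descend:
  fixes depth :: "'a \<Rightarrow> nat"
  assumes "u \<in> V"
    and "\<And>w. w \<in> V \<Longrightarrow> \<not> is_root w \<Longrightarrow> parent w \<in> V \<and> depth (parent w) < depth w"
  shows "\<exists>v\<in>V. is_root v"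
  using assms(1)
proof (induction "depth u" arbitrary: u rule: less_induct)
  case less
  then show ?case using assms(2) by blast
qed

lemma cong_mod_sum_iff:
  fixes a b q :: int
  shows "[b mod q = a + (\<Sum>w\<in>A. f w mod q)] (mod q) \<longleftrightarrow> [b = a + sum f A] (mod q)"
proof -
  have "(a + (\<Sum>w\<in>A. f w mod q)) mod q = (a + (\<Sum>w\<in>A. f w mod q) mod q) mod q"
    by (simp add: mod_add_right_eq)
  also have "\<dots> = (a + sum f A) mod q"
    by (simp add: mod_sum_eq mod_add_right_eq)
  finally show ?thesis by (simp add: cong_def)
qed

text \<open>Summing the relations \<open>S u \<equiv> h u + (sum of S over the children of u)\<close> over all nodes,
  the value at each non-root cancels against its occurrence at its parent.\<close>
lemma sum_roots_cong:
  fixes S h :: "'a \<Rightarrow> int"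
  assumes V: "finite V" and parent: "\<And>w. w \<in> V \<Longrightarrow> \<not> is_root w \<Longrightarrow> parent w \<in> V"
    and rec: "\<And>u. u \<in> V \<Longrightarrow> [S u = h u + (\<Sum>w\<in>{w\<in>V. \<not> is_root w \<and> parent w = u}. S w)] (mod q)"
  shows "[(\<Sum>u\<in>{u\<in>V. is_root u}. S u) = (\<Sum>u\<in>V. h u)] (mod q)"
proof -
  have "(\<Sum>u\<in>V. \<Sum>w\<in>{w\<in>{w\<in>V. \<not> is_root w}. parent w = u}. S w) = (\<Sum>w\<in>{w\<in>V. \<not> is_root w}. S w)"
    by (rule sum.group) (use V parent in auto)
  moreover have "{w\<in>{w\<in>V. \<not> is_root w}. parent w = u} = {w\<in>V. \<not> is_root w \<and> parent w = u}" for u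
    by auto
  ultimately have children:
    "(\<Sum>u\<in>V. \<Sum>w\<in>{w\<in>V. \<not> is_root w \<and> parent w = u}. S w) = (\<Sum>w\<in>{w\<in>V. \<not> is_root w}. S w)"
    by simp
  have "(\<Sum>u\<in>V. S u) = (\<Sum>u\<in>{u\<in>V. is_root u} \<union> {w\<in>V. \<not> is_root w}. S u)"
    by (rule sum.cong) auto
  also have "\<dots> = (\<Sum>u\<in>{u\<in>V. is_root u}. S u) + (\<Sum>w\<in>{w\<in>V. \<not> is_root w}. S w)"
    by (rule sum.union_disjoint) (use V in auto)
  finally have split:
    "(\<Sum>u\<in>V. S u) = (\<Sum>u\<in>{u\<in>V. is_root u}. S u) + (\<Sum>w\<in>{w\<in>V. \<not> is_root w}. S w)" .
  have "[(\<Sum>u\<in>V. S u) = (\<Sum>u\<in>V. h u + (\<Sum>w\<in>{w\<in>V. \<not> is_root w \<and> parent w = u}. S w))] (mod q)"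
    by (rule cong_sum) (use rec in auto)
  then have "[(\<Sum>u\<in>{u\<in>V. is_root u}. S u) + (\<Sum>w\<in>{w\<in>V. \<not> is_root w}. S w)
      = (\<Sum>u\<in>V. h u) + (\<Sum>w\<in>{w\<in>V. \<not> is_root w}. S w)] (mod q)"
    unfolding split sum.distrib children .
  then show ?thesis by (simp only: cong_add_rcancel)
qed

lemma ex_solution_children_recursion:
  fixes h :: "'a \<Rightarrow> 'b::comm_monoid_add" and depth :: "'a \<Rightarrow> nat"
  assumes "\<And>u w. w \<in> children u \<Longrightarrow> depth u < depth w \<and> depth w \<le> N"
  shows "\<exists>S. \<forall>u. S u = h u + sum S (children u)"
proof -
  define F where "F g u = h u + sum g (children u)" for g u
  have iter: "(F ^^ Suc n) g u = h u + sum ((F ^^ n) g) (children u)" for n g u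
    by (simp add: F_def)
  have stable: "(F ^^ Suc k) (\<lambda>_. 0) u = (F ^^ Suc (Suc k)) (\<lambda>_. 0) u" if "N \<le> depth u + k" for k u
    using that
  proof (induction k arbitrary: u)
    case 0
    then have "children u = {}" using assms by fastforce
    then show ?case by (simp only: iter) simp
  next
    case (Suc k)
    have deep: "N \<le> depth w + k" if "w \<in> children u" for w
      using assms[OF that] Suc.prems by linarith
    have "sum ((F ^^ Suc k) (\<lambda>_. 0)) (children u) = sum ((F ^^ Suc (Suc k)) (\<lambda>_. 0)) (children u)"
      by (intro sum.cong refl Suc.IH deep)
    then show ?case by (simp only: iter)
  qed
  have "(F ^^ Suc N) (\<lambda>_. 0) u = h u + sum ((F ^^ Suc N) (\<lambda>_. 0)) (children u)" for u
    by (rule trans[OF stable iter]) simp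
  then show ?thesis by (intro exI allI)
qed

lemma spanning_tree:
  assumes V: "finite V" and E: "\<And>u w. E u w \<Longrightarrow> u \<in> V \<and> w \<in> V"
    and connected: "\<And>u. u \<in> V \<Longrightarrow> E\<^sup>*\<^sup>* u v\<^sub>0" and "v\<^sub>0 \<in> V"
  obtains depth :: "'a \<Rightarrow> nat" and parent
  where "\<And>u. u \<in> V \<Longrightarrow> depth u \<le> card V * card V"
    and "\<And>u. u \<in> V \<Longrightarrow> u \<noteq> v\<^sub>0 \<Longrightarrow> parent u \<in> V \<and> E u (parent u) \<and> depth (parent u) < depth u"
proof -
  define R where "R = {(a, b). E a b}"
  have "R \<subseteq> V \<times> V" unfolding R_def using E by auto
  then have R: "finite R" "card R \<le> card V * card V"
    using V finite_subset card_mono[of "V \<times> V" R] by (auto simp: card_cartesian_product)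
  define depth where "depth u = (LEAST k. (u, v\<^sub>0) \<in> R ^^ k)" for u
  have depth: "depth u \<le> card R \<and> (u, v\<^sub>0) \<in> R ^^ depth u" if u: "u \<in> V" for u
  proof -
    have "E = (\<lambda>a b. (a, b) \<in> R)" unfolding R_def by simp
    then have "(u, v\<^sub>0) \<in> R\<^sup>*" using connected[OF u] by (simp add: rtranclp_rtrancl_eq)
    then obtain k where k: "k \<le> card R" "(u, v\<^sub>0) \<in> R ^^ k"
      unfolding rtrancl_finite_eq_relpow[OF R(1)] by auto
    have "depth u \<le> k" unfolding depth_def by (rule Least_le) (rule k(2))
    moreover have "(u, v\<^sub>0) \<in> R ^^ depth u" unfolding depth_def by (rule LeastI) (rule k(2))
    ultimately show ?thesis using k(1) by simp
  qed
  have step: "\<exists>w. w \<in> V \<and> E u w \<and> depth w < depth u" if u: "u \<in> V" and "u \<noteq> v\<^sub>0" for u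
  proof -
    obtain j where j: "depth u = Suc j" using depth[OF u] \<open>u \<noteq> v\<^sub>0\<close> by (cases "depth u") auto
    moreover have "(u, v\<^sub>0) \<in> R ^^ Suc j" using depth[OF u] j by simp
    then obtain w where "(u, w) \<in> R" "(w, v\<^sub>0) \<in> R ^^ j" by (blast dest: relpow_Suc_D2)
    moreover have "depth w \<le> j" unfolding depth_def by (rule Least_le) fact
    ultimately show ?thesis using E j unfolding R_def by (intro exI[of _ w]) auto
  qed
  define parent where "parent u = (SOME w. w \<in> V \<and> E u w \<and> depth w < depth u)" for u
  show ?thesis
  proof (rule that)
    show "depth u \<le> card V * card V" if "u \<in> V" for u
      using depth[OF that] R(2) by linarith
    show "parent u \<in> V \<and> E u (parent u) \<and> depth (parent u) < depth u"
      if "u \<in> V" "u \<noteq> v\<^sub>0" for u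
      unfolding parent_def by (rule someI_ex) (rule step[OF that])
  qed
qed

section \<open>The protocol\<close>

lemma le_two_power_clog:
  assumes "1 \<le> n"
  shows "n \<le> 2 ^ clog n"
proof -
  have "real n = 2 powr (log 2 (real n))" using assms by simp
  also have "\<dots> \<le> 2 powr real (clog n)"
    using assms unfolding clog_def by (intro powr_mono) auto
  finally show ?thesis by (simp add: powr_realpow flip: of_nat_le_iff)
qed

text \<open>\<open>2 ^ coin_bits c n \<ge> 4 n\<^sup>2 n\<^sup>c\<close>: this keeps all multiplicities below the prime and makes
  the union bound \<open>n \<cdot> n\<^sup>c / 2 ^ coin_bits c n\<close> smaller than \<open>1/3\<close>.\<close>
definition coin_bits :: "nat \<Rightarrow> nat \<Rightarrow> nat" where
  "coin_bits c n = (c + 2) * clog n + 2"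

definition field_prime :: "nat \<Rightarrow> nat \<Rightarrow> nat" where
  "field_prime c n = (LEAST p. prime p \<and> 2 ^ coin_bits c n \<le> p)"

definition id_bits :: "nat \<Rightarrow> nat \<Rightarrow> nat" where
  "id_bits \<kappa> n = \<kappa> * clog n"

definition depth_bits :: "nat \<Rightarrow> nat" where
  "depth_bits n = 2 * clog n + 1"

definition sum_bits :: "nat \<Rightarrow> nat \<Rightarrow> nat" where
  "sum_bits c n = 4 * coin_bits c n + 1"

definition label_bits :: "nat \<Rightarrow> nat \<Rightarrow> nat \<Rightarrow> nat" where
  "label_bits c \<kappa> n = coin_bits c n + 1 + id_bits \<kappa> n + depth_bits n + sum_bits c n"

lemma coin_bits_large:
  assumes "1 \<le> n"
  shows "4 * n * n * 2 ^ (c * clog n) \<le> 2 ^ coin_bits c n"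
proof -
  have "4 * n * n * 2 ^ (c * clog n) \<le> 4 * 2 ^ clog n * 2 ^ clog n * 2 ^ (c * clog n)"
    using le_two_power_clog[OF assms] by (intro mult_le_mono) auto
  also have "\<dots> = 2 ^ coin_bits c n"
    unfolding coin_bits_def by (simp flip: power_add)
  finally show ?thesis .
qed

lemma power_le_two_power_id_bits: "1 \<le> n \<Longrightarrow> n ^ \<kappa> \<le> 2 ^ id_bits \<kappa> n"
  using power_mono[OF le_two_power_clog, of n \<kappa>]
  by (simp add: id_bits_def power_mult[symmetric] mult.commute)

lemma square_less_two_power_depth_bits:
  assumes "1 \<le> n"
  shows "n * n < 2 ^ depth_bits n"
proof -
  have "n * n \<le> 2 ^ clog n * 2 ^ clog n" using le_two_power_clog[OF assms] by (intro mult_le_mono)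
  also have "\<dots> < 2 ^ depth_bits n" by (simp add: depth_bits_def power_add[symmetric] mult_2)
  finally show ?thesis .
qed

lemma field_prime:
  "prime (field_prime c n) \<and> 2 ^ coin_bits c n \<le> field_prime c n \<and> field_prime c n < 2 ^ sum_bits c n"
proof -
  obtain p :: nat where p: "prime p" "2 ^ coin_bits c n \<le> p" "p \<le> 2 ^ (4 * coin_bits c n)"
    using prime_between_powers_of_two[of "coin_bits c n"] by (auto simp: coin_bits_def)
  have "prime (field_prime c n) \<and> 2 ^ coin_bits c n \<le> field_prime c n"
    unfolding field_prime_def by (rule LeastI[of _ p]) (use p in auto)
  moreover have "field_prime c n \<le> p"
    unfolding field_prime_def by (rule Least_le) (use p in auto)
  moreover have "p < 2 ^ sum_bits c n"
    using p(3) unfolding sum_bits_def by (simp add: le_less_trans)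
  ultimately show ?thesis by auto
qed

lemma label_bits_le: "label_bits c \<kappa> n \<le> (5 * c + \<kappa> + 13) * (clog n + 1)"
  unfolding label_bits_def coin_bits_def id_bits_def depth_bits_def sum_bits_def
  by (simp add: algebra_simps)

text \<open>Labels have five fixed-width fields: the evaluation point, a root flag, the parent, the
  depth in the spanning tree and the subtree sum modulo the prime.\<close>
definition mk_label :: "nat \<Rightarrow> nat \<Rightarrow> nat \<Rightarrow> nat \<Rightarrow> bool \<Rightarrow> nat \<Rightarrow> nat \<Rightarrow> nat \<Rightarrow> bool list" where
  "mk_label c \<kappa> n z is_root par d s =
     bits_of (coin_bits c n) z @ bits_of 1 (of_bool is_root) @ bits_of (id_bits \<kappa> n) par @
     bits_of (depth_bits n) d @ bits_of (sum_bits c n) s"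

definition label_point :: "nat \<Rightarrow> nat \<Rightarrow> bool list \<Rightarrow> nat" where
  "label_point c n l = bits_field l 0 (coin_bits c n)"

definition label_is_root :: "nat \<Rightarrow> nat \<Rightarrow> bool list \<Rightarrow> bool" where
  "label_is_root c n l \<longleftrightarrow> bits_field l (coin_bits c n) 1 = 1"

definition label_parent :: "nat \<Rightarrow> nat \<Rightarrow> nat \<Rightarrow> bool list \<Rightarrow> nat" where
  "label_parent c \<kappa> n l = bits_field l (coin_bits c n + 1) (id_bits \<kappa> n)"

definition label_depth :: "nat \<Rightarrow> nat \<Rightarrow> nat \<Rightarrow> bool list \<Rightarrow> nat" where
  "label_depth c \<kappa> n l = bits_field l (coin_bits c n + 1 + id_bits \<kappa> n) (depth_bits n)"

definition label_sum :: "nat \<Rightarrow> nat \<Rightarrow> nat \<Rightarrow> bool list \<Rightarrow> nat" where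
  "label_sum c \<kappa> n l = bits_field l (coin_bits c n + 1 + id_bits \<kappa> n + depth_bits n) (sum_bits c n)"

lemma length_mk_label: "length (mk_label c \<kappa> n z r par d s) = label_bits c \<kappa> n"
  unfolding mk_label_def label_bits_def by simp

lemma mk_label_fields:
  fixes r :: bool
  assumes n: "1 \<le> n" and z: "z < 2 ^ coin_bits c n"
    and "par < n ^ \<kappa>" and "d \<le> n * n" and "s < field_prime c n"
  defines "l \<equiv> mk_label c \<kappa> n z r par d s"
  shows "label_point c n l = z \<and> label_is_root c n l = r \<and> label_parent c \<kappa> n l = par \<and>
    label_depth c \<kappa> n l = d \<and> label_sum c \<kappa> n l = s"
proof -
  have "par < 2 ^ id_bits \<kappa> n" "d < 2 ^ depth_bits n" "s < 2 ^ sum_bits c n"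
    using assms power_le_two_power_id_bits[OF n, of \<kappa>] square_less_two_power_depth_bits[OF n]
      field_prime[of c n] by linarith+
  then show ?thesis
    using z bits_field_append[OF refl, where xs = "[]"]
      bits_field_append[OF refl, where xs = "bits_of (coin_bits c n) z" and x = "of_bool r" and w = 1]
      bits_field_append[OF refl, where xs = "bits_of (coin_bits c n) z @ bits_of 1 (of_bool r)"]
      bits_field_append[OF refl, where xs = "bits_of (coin_bits c n) z @ bits_of 1 (of_bool r) @
        bits_of (id_bits \<kappa> n) par"]
      bits_field_append[OF refl, where xs = "bits_of (coin_bits c n) z @ bits_of 1 (of_bool r) @
        bits_of (id_bits \<kappa> n) par @ bits_of (depth_bits n) d" and ys = "[]"]
    unfolding l_def label_point_def label_is_root_def label_parent_def label_depth_def label_sum_def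
      mk_label_def
    by (simp add: add.assoc)
qed

definition local_term :: "bool list list \<times> bool list list \<Rightarrow> int \<Rightarrow> int" where
  "local_term inp z =
     power_sum (image_mset bits_val (mset (fst inp))) z - power_sum (image_mset bits_val (mset (snd inp))) z"

definition seteq_decider :: "nat \<Rightarrow> nat \<Rightarrow> (bool list list \<times> bool list list) decider" where
  "seteq_decider c \<kappa> n u inp cs l nb \<longleftrightarrow>
     (\<forall>w l'. nb w = Some l' \<longrightarrow> label_point c n l' = label_point c n l) \<and>
     (if label_is_root c n l
      then label_point c n l = bits_val cs \<and> label_sum c \<kappa> n l mod field_prime c n = 0
      else (\<exists>l'. nb (label_parent c \<kappa> n l) = Some l' \<and> label_depth c \<kappa> n l' < label_depth c \<kappa> n l)) \<and>
     [int (label_sum c \<kappa> n l) = local_term inp (label_point c n l) +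
        (\<Sum>w\<in>{w. \<exists>l'. nb w = Some l' \<and> \<not> label_is_root c n l' \<and> label_parent c \<kappa> n l' = u}.
           int (label_sum c \<kappa> n (the (nb w))))] (mod int (field_prime c n))"

definition consistent_labels ::
  "nat \<Rightarrow> nat \<Rightarrow> nat \<Rightarrow> nat set \<Rightarrow> (nat \<Rightarrow> nat \<Rightarrow> bool) \<Rightarrow> (nat \<Rightarrow> bool list list \<times> bool list list)
     \<Rightarrow> (nat \<Rightarrow> bool list) \<Rightarrow> (nat \<Rightarrow> bool list) \<Rightarrow> bool" where
  "consistent_labels c \<kappa> n V E x \<rho> lab \<longleftrightarrow>
     (\<forall>u w. E u w \<longrightarrow> label_point c n (lab w) = label_point c n (lab u)) \<and>
     (\<forall>u\<in>V. if label_is_root c n (lab u)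
       then label_point c n (lab u) = bits_val (\<rho> u) \<and> label_sum c \<kappa> n (lab u) mod field_prime c n = 0
       else label_parent c \<kappa> n (lab u) \<in> V \<and> E u (label_parent c \<kappa> n (lab u)) \<and>
         label_depth c \<kappa> n (lab (label_parent c \<kappa> n (lab u))) < label_depth c \<kappa> n (lab u)) \<and>
     (\<forall>u\<in>V. [int (label_sum c \<kappa> n (lab u)) = local_term (x u) (label_point c n (lab u)) +
         (\<Sum>w\<in>{w\<in>V. \<not> label_is_root c n (lab w) \<and> label_parent c \<kappa> n (lab w) = u}.
            int (label_sum c \<kappa> n (lab w)))] (mod int (field_prime c n)))"

lemma all_accept_seteq_decider_iff:
  assumes "wf_graph \<kappa> V E"
  shows "all_accept V E x (seteq_decider c \<kappa>) P \<rho> \<longleftrightarrow> consistent_labels c \<kappa> (card V) V E x \<rho> (P \<rho>)"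
proof -
  define n where "n = card V"
  define lab where "lab = P \<rho>"
  define nb where "nb u w = (if w \<in> V \<and> E u w then Some (lab w) else None)" for u w
  have E_in: "E u w \<Longrightarrow> u \<in> V \<and> w \<in> V" and E_sym: "E u w \<Longrightarrow> E w u" for u w
    using assms unfolding wf_graph_def by blast+
  let ?point = "label_point c n" and ?root = "label_is_root c n" and ?parent = "label_parent c \<kappa> n"
    and ?depth = "label_depth c \<kappa> n" and ?sum = "label_sum c \<kappa> n" and ?p = "field_prime c n"
  define agrees where "agrees u \<longleftrightarrow> (\<forall>w. E u w \<longrightarrow> ?point (lab w) = ?point (lab u))" for u
  define rooted where "rooted u \<longleftrightarrow> (if ?root (lab u)
      then ?point (lab u) = bits_val (\<rho> u) \<and> ?sum (lab u) mod ?p = 0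
      else ?parent (lab u) \<in> V \<and> E u (?parent (lab u)) \<and> ?depth (lab (?parent (lab u))) < ?depth (lab u))"
    for u
  define sum_nb where "sum_nb u \<longleftrightarrow> [int (?sum (lab u)) = local_term (x u) (?point (lab u)) +
      (\<Sum>w\<in>{w. \<exists>l. nb u w = Some l \<and> \<not> ?root l \<and> ?parent l = u}. int (?sum (the (nb u w))))]
      (mod int ?p)" for u
  define sum_ok where "sum_ok u \<longleftrightarrow> [int (?sum (lab u)) = local_term (x u) (?point (lab u)) +
      (\<Sum>w\<in>{w\<in>V. \<not> ?root (lab w) \<and> ?parent (lab w) = u}. int (?sum (lab w)))] (mod int ?p)" for u
  have "all_accept V E x (seteq_decider c \<kappa>) P \<rho> \<longleftrightarrow>
      (\<forall>u\<in>V. seteq_decider c \<kappa> n u (x u) (\<rho> u) (lab u) (nb u))"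
    unfolding all_accept_def n_def lab_def nb_def ..
  moreover have "seteq_decider c \<kappa> n u (x u) (\<rho> u) (lab u) (nb u) \<longleftrightarrow> agrees u \<and> rooted u \<and> sum_nb u"
    if "u \<in> V" for u
  proof -
    have "(\<forall>w l. nb u w = Some l \<longrightarrow> ?point l = ?point (lab u)) \<longleftrightarrow> agrees u"
      unfolding agrees_def nb_def using E_in by auto
    moreover have "(\<exists>l. nb u (?parent (lab u)) = Some l \<and> ?depth l < ?depth (lab u)) \<longleftrightarrow>
        ?parent (lab u) \<in> V \<and> E u (?parent (lab u)) \<and> ?depth (lab (?parent (lab u))) < ?depth (lab u)"
      unfolding nb_def by (simp split: if_split) blast
    ultimately show ?thesis unfolding seteq_decider_def rooted_def sum_nb_def by simp
  qed
  moreover have "sum_nb u \<longleftrightarrow> sum_ok u" if "\<forall>w\<in>V. rooted w" for u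
  proof -
    have "{w. \<exists>l. nb u w = Some l \<and> \<not> ?root l \<and> ?parent l = u}
        = {w\<in>V. \<not> ?root (lab w) \<and> ?parent (lab w) = u}"
      using that E_sym unfolding nb_def rooted_def by (auto split: if_splits)
    moreover have "(\<Sum>w\<in>{w\<in>V. \<not> ?root (lab w) \<and> ?parent (lab w) = u}. int (?sum (the (nb u w))))
        = (\<Sum>w\<in>{w\<in>V. \<not> ?root (lab w) \<and> ?parent (lab w) = u}. int (?sum (lab w)))"
      using that E_sym unfolding nb_def rooted_def by (intro sum.cong) (auto split: if_splits)
    ultimately show ?thesis unfolding sum_nb_def sum_ok_def by (simp only:)
  qed
  moreover have "consistent_labels c \<kappa> n V E x \<rho> lab \<longleftrightarrow> (\<forall>u\<in>V. agrees u \<and> rooted u \<and> sum_ok u)"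
    unfolding consistent_labels_def agrees_def rooted_def sum_ok_def using E_in by blast
  ultimately show ?thesis
    unfolding n_def[symmetric] lab_def[symmetric] by blast
qed

definition input_values :: "nat set \<Rightarrow> (nat \<Rightarrow> bool list list) \<Rightarrow> nat multiset" where
  "input_values V xs = image_mset bits_val (\<Sum>u\<in>V. mset (xs u))"

lemma sum_local_term:
  "(\<Sum>u\<in>V. local_term (x u) z) =
     power_sum (input_values V (\<lambda>u. fst (x u))) z - power_sum (input_values V (\<lambda>u. snd (x u))) z"
  unfolding input_values_def
  by (induction V rule: infinite_finite_induct) (simp_all add: local_term_def power_sum_def)

section \<open>Soundness and completeness\<close>

lemma consistent_labels_imp_root_of_sum:
  assumes wf: "wf_graph \<kappa> V E" and cons: "consistent_labels c \<kappa> n V E x \<rho> lab"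
  shows "\<exists>v\<in>V. [(\<Sum>u\<in>V. local_term (x u) (bits_val (\<rho> v))) = 0] (mod int (field_prime c n))"
proof -
  let ?point = "\<lambda>u. label_point c n (lab u)" and ?root = "\<lambda>u. label_is_root c n (lab u)"
    and ?parent = "\<lambda>u. label_parent c \<kappa> n (lab u)" and ?depth = "\<lambda>u. label_depth c \<kappa> n (lab u)"
    and ?sum = "\<lambda>u. int (label_sum c \<kappa> n (lab u))" and ?p = "int (field_prime c n)"
  from wf have V: "finite V" "V \<noteq> {}" and connected: "\<And>u w. u \<in> V \<Longrightarrow> w \<in> V \<Longrightarrow> E\<^sup>*\<^sup>* u w"
    unfolding wf_graph_def by auto
  from cons have agree: "\<And>u w. E u w \<Longrightarrow> ?point w = ?point u"
    and root: "\<And>u. u \<in> V \<Longrightarrow> ?root u \<Longrightarrow> ?point u = bits_val (\<rho> u) \<and> [?sum u = 0] (mod ?p)"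
    and parent: "\<And>u. u \<in> V \<Longrightarrow> \<not> ?root u \<Longrightarrow> ?parent u \<in> V \<and> ?depth (?parent u) < ?depth u"
    and rec: "\<And>u. u \<in> V \<Longrightarrow> [?sum u = local_term (x u) (?point u) +
                 (\<Sum>w\<in>{w\<in>V. \<not> ?root w \<and> ?parent w = u}. ?sum w)] (mod ?p)"
    unfolding consistent_labels_def cong_def by (simp_all add: zmod_int[symmetric])
  obtain v where v: "v \<in> V" "?root v"
    using ex_root_if_parents_descend[of _ V ?root ?parent ?depth] parent V(2) by blast
  have point: "?point u = bits_val (\<rho> v)" if "u \<in> V" for u
    using rtranclp_eq_if_edges_eq[OF connected[OF that v(1)], of ?point] agree root[OF v] by metis
  have roots_sum: "[(\<Sum>u\<in>{u\<in>V. ?root u}. ?sum u) = (\<Sum>u\<in>V. local_term (x u) (bits_val (\<rho> v)))]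
      (mod ?p)"
  proof (rule sum_roots_cong[OF V(1), where is_root = ?root and parent = ?parent])
    show "?parent w \<in> V" if "w \<in> V" "\<not> ?root w" for w
      using parent[OF that] by simp
    show "[?sum u = local_term (x u) (bits_val (\<rho> v)) +
        (\<Sum>w\<in>{w\<in>V. \<not> ?root w \<and> ?parent w = u}. ?sum w)] (mod ?p)" if "u \<in> V" for u
      using rec[OF that] point[OF that] by simp
  qed
  have "[(\<Sum>u\<in>{u\<in>V. ?root u}. ?sum u) = 0] (mod ?p)"
    using cong_sum[of "{u\<in>V. ?root u}" ?sum "\<lambda>_. 0"] root by simp
  then show ?thesis using v(1) cong_trans[OF cong_sym[OF roots_sum]] by blast
qed

lemma honest_labels_consistent:
  assumes wf: "wf_graph \<kappa> V E" and n: "n = card V" and "v\<^sub>0 \<in> V"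
    and depth: "\<And>u. u \<in> V \<Longrightarrow> depth u \<le> n * n"
    and parent: "\<And>u. u \<in> V \<Longrightarrow> u \<noteq> v\<^sub>0 \<Longrightarrow> parent u \<in> V \<and> E u (parent u) \<and> depth (parent u) < depth u"
    and S: "\<And>u. S u = local_term (x u) z + sum S {w\<in>V. w \<noteq> v\<^sub>0 \<and> parent w = u}"
    and total: "(\<Sum>u\<in>V. local_term (x u) z) = 0"
    and z: "z = bits_val (\<rho> v\<^sub>0)" "z < 2 ^ coin_bits c n"
  shows "consistent_labels c \<kappa> n V E x \<rho> (\<lambda>u. mk_label c \<kappa> n z (u = v\<^sub>0) (if u = v\<^sub>0 then 0 else parent u)
           (depth u) (nat (S u mod int (field_prime c n))))"
    (is "consistent_labels c \<kappa> n V E x \<rho> ?lab")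
proof -
  define p where "p = field_prime c n"
  define lab where "lab = ?lab"
  have V: "finite V" "V \<subseteq> {..<n ^ \<kappa>}" and n1: "1 \<le> n"
    and E_in: "\<And>u w. E u w \<Longrightarrow> u \<in> V \<and> w \<in> V"
    using wf unfolding wf_graph_def n by (auto simp: Suc_le_eq card_gt_0_iff)
  have p: "0 < p" using field_prime[of c n] prime_gt_0_nat unfolding p_def by auto
  have fields: "label_point c n (lab u) = z \<and> label_is_root c n (lab u) = (u = v\<^sub>0) \<and>
      (u \<noteq> v\<^sub>0 \<longrightarrow> label_parent c \<kappa> n (lab u) = parent u) \<and> label_depth c \<kappa> n (lab u) = depth u \<and>
      int (label_sum c \<kappa> n (lab u)) = S u mod int p" if "u \<in> V" for u
  proof -
    have "(if u = v\<^sub>0 then 0 else parent u) < n ^ \<kappa>" using parent[OF that] V(2) n1 by auto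
    moreover have "nat (S u mod int p) < p" using p by (simp add: nat_less_iff)
    ultimately show ?thesis
      using mk_label_fields[OF n1 z(2) _ depth[OF that], where r = "u = v\<^sub>0"] p
      unfolding lab_def p_def by (cases "u = v\<^sub>0") simp_all
  qed
  have "[(\<Sum>u\<in>{u\<in>V. u = v\<^sub>0}. S u) = (\<Sum>u\<in>V. local_term (x u) z)] (mod int p)"
  proof (rule sum_roots_cong[OF V(1), where parent = parent])
    show "parent w \<in> V" if "w \<in> V" "w \<noteq> v\<^sub>0" for w
      using parent that by blast
    show "[S u = local_term (x u) z + (\<Sum>w\<in>{w\<in>V. w \<noteq> v\<^sub>0 \<and> parent w = u}. S w)] (mod int p)" for u
      using S[of u] by simp
  qed
  moreover have "{u\<in>V. u = v\<^sub>0} = {v\<^sub>0}" using \<open>v\<^sub>0 \<in> V\<close> by auto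
  ultimately have root_sum: "S v\<^sub>0 mod int p = 0"
    using total by (simp add: cong_def)
  have children: "{w\<in>V. \<not> label_is_root c n (lab w) \<and> label_parent c \<kappa> n (lab w) = u}
      = {w\<in>V. w \<noteq> v\<^sub>0 \<and> parent w = u}" for u
    using fields by auto
  have subtree_sum: "[S u mod int p = local_term (x u) z +
      (\<Sum>w\<in>{w\<in>V. w \<noteq> v\<^sub>0 \<and> parent w = u}. S w mod int p)] (mod int p)" for u
    unfolding cong_mod_sum_iff using S[of u] by simp
  have "consistent_labels c \<kappa> n V E x \<rho> lab"
    unfolding consistent_labels_def p_def[symmetric] children
  proof (intro conjI ballI allI impI)
    show "label_point c n (lab w) = label_point c n (lab u)" if "E u w" for u w
      using fields E_in[OF that] by simp
    show "if label_is_root c n (lab u)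
        then label_point c n (lab u) = bits_val (\<rho> u) \<and> label_sum c \<kappa> n (lab u) mod p = 0
        else label_parent c \<kappa> n (lab u) \<in> V \<and> E u (label_parent c \<kappa> n (lab u)) \<and>
          label_depth c \<kappa> n (lab (label_parent c \<kappa> n (lab u))) < label_depth c \<kappa> n (lab u)"
      if "u \<in> V" for u
      using fields[OF that] fields[of "parent u"] parent[OF that] root_sum z(1)
      by (auto simp flip: zmod_int)
    show "[int (label_sum c \<kappa> n (lab u)) = local_term (x u) (label_point c n (lab u)) +
        (\<Sum>w\<in>{w\<in>V. w \<noteq> v\<^sub>0 \<and> parent w = u}. int (label_sum c \<kappa> n (lab w)))] (mod int p)"
      if "u \<in> V" for u
    proof -
      have "(\<Sum>w\<in>{w\<in>V. w \<noteq> v\<^sub>0 \<and> parent w = u}. int (label_sum c \<kappa> n (lab w)))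
          = (\<Sum>w\<in>{w\<in>V. w \<noteq> v\<^sub>0 \<and> parent w = u}. S w mod int p)"
        using fields by (intro sum.cong) auto
      then show ?thesis using subtree_sum[of u] fields[OF that] by simp
    qed
  qed
  then show ?thesis unfolding lab_def .
qed

lemma seteq_complete:
  assumes "(V, E, x) \<in> seteq_lang c \<kappa>"
  shows "\<exists>P. prover_size_ok V (coin_bits c) (label_bits c \<kappa>) P \<and>
    acc_prob V E x (coin_bits c) (seteq_decider c \<kappa>) P > 2/3"
proof -
  define n where "n = card V"
  from assms have wf: "wf_graph \<kappa> V E"
    and balanced: "(\<Sum>u\<in>V. mset (fst (x u))) = (\<Sum>u\<in>V. mset (snd (x u)))"
    unfolding seteq_lang_def seteq_dom_def by auto
  then have V: "finite V" "V \<noteq> {}" and E_in: "\<And>u w. E u w \<Longrightarrow> u \<in> V \<and> w \<in> V"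
    and connected: "\<And>u w. u \<in> V \<Longrightarrow> w \<in> V \<Longrightarrow> E\<^sup>*\<^sup>* u w"
    unfolding wf_graph_def by blast+
  obtain v\<^sub>0 where v\<^sub>0: "v\<^sub>0 \<in> V" using V(2) by blast
  obtain depth :: "nat \<Rightarrow> nat" and parent where depth: "\<And>u. u \<in> V \<Longrightarrow> depth u \<le> n * n"
    and parent: "\<And>u. u \<in> V \<Longrightarrow> u \<noteq> v\<^sub>0 \<Longrightarrow> parent u \<in> V \<and> E u (parent u) \<and> depth (parent u) < depth u"
    using spanning_tree[OF V(1) E_in connected[OF _ v\<^sub>0] v\<^sub>0] unfolding n_def by blast
  have "\<forall>z. \<exists>S. \<forall>u. S u = local_term (x u) z + sum S {w\<in>V. w \<noteq> v\<^sub>0 \<and> parent w = u}"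
    using parent depth by (intro allI ex_solution_children_recursion[where depth = depth]) auto
  then obtain S where S: "\<And>z u. S z u = local_term (x u) z + sum (S z) {w\<in>V. w \<noteq> v\<^sub>0 \<and> parent w = u}"
    by metis
  define P where "P \<rho> u = mk_label c \<kappa> n (bits_val (\<rho> v\<^sub>0)) (u = v\<^sub>0) (if u = v\<^sub>0 then 0 else parent u)
    (depth u) (nat (S (int (bits_val (\<rho> v\<^sub>0))) u mod int (field_prime c n)))" for \<rho> u
  have size: "prover_size_ok V (coin_bits c) (label_bits c \<kappa>) P"
    unfolding prover_size_ok_def P_def n_def by (simp add: length_mk_label)
  have "all_accept V E x (seteq_decider c \<kappa>) P \<rho>" if "\<rho> \<in> coins V (coin_bits c n)" for \<rho>
  proof -
    have "length (\<rho> v\<^sub>0) = coin_bits c n" using that v\<^sub>0 unfolding coins_def by auto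
    then have "bits_val (\<rho> v\<^sub>0) < 2 ^ coin_bits c n" using bits_val_less by metis
    moreover have "(\<Sum>u\<in>V. local_term (x u) z) = 0" for z
      by (simp add: sum_local_term input_values_def balanced)
    ultimately show ?thesis
      unfolding all_accept_seteq_decider_iff[OF wf] n_def[symmetric] P_def
      by (intro honest_labels_consistent[OF wf n_def v\<^sub>0 depth parent S]) simp_all
  qed
  then have "{\<rho> \<in> coins V (coin_bits c n). all_accept V E x (seteq_decider c \<kappa>) P \<rho>} = coins V (coin_bits c n)"
    by auto
  then have "acc_prob V E x (coin_bits c) (seteq_decider c \<kappa>) P = 1"
    unfolding acc_prob_def n_def[symmetric] using card_coins[OF V(1)] by simp
  then show ?thesis using size by auto
qed

lemma accepting_coins_hit_power_sum_roots:
  assumes wf: "wf_graph \<kappa> V E" and "all_accept V E x (seteq_decider c \<kappa>) P \<rho>"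
    and \<rho>: "\<rho> \<in> coins V (coin_bits c (card V))"
  shows "\<exists>v\<in>V. bits_val (\<rho> v) \<in> power_sum_roots (field_prime c (card V))
    (input_values V (\<lambda>u. fst (x u))) (input_values V (\<lambda>u. snd (x u)))"
proof -
  obtain v where "v \<in> V"
    and "[(\<Sum>u\<in>V. local_term (x u) (bits_val (\<rho> v))) = 0] (mod int (field_prime c (card V)))"
    using consistent_labels_imp_root_of_sum[OF wf] all_accept_seteq_decider_iff[OF wf] assms(2) by blast
  moreover have "length (\<rho> v) = coin_bits c (card V)" using \<rho> \<open>v \<in> V\<close> unfolding coins_def by auto
  then have "bits_val (\<rho> v) < field_prime c (card V)"
    using bits_val_less[of "\<rho> v"] field_prime[of c "card V"] by simp
  ultimately show ?thesis by (auto simp: power_sum_roots_def sum_local_term cong_def)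
qed

lemma card_power_sum_roots_seteq:
  assumes dom: "(V, E, x) \<in> seteq_dom c \<kappa>" and "(V, E, x) \<notin> seteq_lang c \<kappa>"
  shows "card (power_sum_roots (field_prime c (card V))
    (input_values V (\<lambda>u. fst (x u))) (input_values V (\<lambda>u. snd (x u)))) \<le> 2 ^ (c * clog (card V))"
proof -
  define n where "n = card V"
  define k where "k = c * clog n"
  define p where "p = field_prime c n"
  define A where "A = input_values V (\<lambda>u. fst (x u))"
  define B where "B = input_values V (\<lambda>u. snd (x u))"
  obtain l where wf: "wf_graph \<kappa> V E" and "l \<le> n"
    and lengths: "\<And>u. u \<in> V \<Longrightarrow> length (fst (x u)) = l \<and> length (snd (x u)) = l"
    and words: "\<And>u s. u \<in> V \<Longrightarrow> s \<in> set (fst (x u)) \<union> set (snd (x u)) \<Longrightarrow> length s = k"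
    using dom unfolding seteq_dom_def n_def k_def by auto
  then have V: "finite V" and n1: "1 \<le> n" unfolding wf_graph_def n_def by (auto simp: Suc_le_eq)
  have "A \<noteq> B"
  proof
    assume "A = B"
    moreover have "inj_on bits_val (set_mset (\<Sum>u\<in>V. mset (fst (x u))) \<union> set_mset (\<Sum>u\<in>V. mset (snd (x u))))"
      using words V by (intro inj_on_subset[OF inj_on_bits_val[of k]]) (auto simp: set_mset_sum)
    ultimately show False
      using assms image_mset_inj_on_eq unfolding A_def B_def input_values_def seteq_lang_def by blast
  qed
  moreover have "size A < p" "size B < p"
  proof -
    have "size A = n * l" "size B = n * l"
      unfolding A_def B_def input_values_def n_def using lengths by simp_all
    moreover have "n * l \<le> n * n * 2 ^ k"
    proof -
      have "n \<le> n * 2 ^ k" by simp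
      then have "l \<le> n * 2 ^ k" using \<open>l \<le> n\<close> by linarith
      then show ?thesis by (simp add: mult.assoc)
    qed
    moreover have "n * n * 2 ^ k < 2 ^ coin_bits c n"
    proof -
      have "0 < n * n * 2 ^ k" using n1 by simp
      then show ?thesis using coin_bits_large[OF n1, of c] unfolding k_def by linarith
    qed
    ultimately show "size A < p" "size B < p" using field_prime[of c n] unfolding p_def by linarith+
  qed
  moreover have "set_mset (A + B) \<subseteq> {..<2 ^ k}"
    using words V bits_val_less unfolding A_def B_def input_values_def by (fastforce simp: set_mset_sum)
  ultimately show ?thesis
    using field_prime[of c n] unfolding A_def B_def p_def n_def k_def by (intro card_power_sum_roots) auto
qed

lemma seteq_sound:
  assumes dom: "(V, E, x) \<in> seteq_dom c \<kappa>" and "(V, E, x) \<notin> seteq_lang c \<kappa>"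
  shows "acc_prob V E x (coin_bits c) (seteq_decider c \<kappa>) P < 1/3"
proof -
  define n where "n = card V"
  define r where "r = coin_bits c n"
  define T where "T = power_sum_roots (field_prime c n)
    (input_values V (\<lambda>u. fst (x u))) (input_values V (\<lambda>u. snd (x u)))"
  let ?accepting = "{\<rho> \<in> coins V r. all_accept V E x (seteq_decider c \<kappa>) P \<rho>}"
  have wf: "wf_graph \<kappa> V E" using dom unfolding seteq_dom_def by auto
  then have V: "finite V" and n1: "1 \<le> n" unfolding wf_graph_def n_def by (auto simp: Suc_le_eq)
  have hit: "?accepting \<subseteq> {\<rho> \<in> coins V r. \<exists>v\<in>V. bits_val (\<rho> v) \<in> T}"
    using accepting_coins_hit_power_sum_roots[OF wf] unfolding T_def r_def n_def by blast
  have "card ?accepting * 2 ^ r \<le> card {\<rho> \<in> coins V r. \<exists>v\<in>V. bits_val (\<rho> v) \<in> T} * 2 ^ r"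
    using card_mono[OF _ hit] finite_coins[OF V] by simp
  also have "\<dots> \<le> n * card T * card (coins V r)"
    unfolding n_def by (rule card_coins_some_value_in[OF V]) (simp add: T_def power_sum_roots_def)
  also have "\<dots> \<le> n * 2 ^ (c * clog n) * card (coins V r)"
    using card_power_sum_roots_seteq[OF assms] unfolding T_def n_def by simp
  finally have "3 * card ?accepting * 2 ^ r \<le> 3 * (n * 2 ^ (c * clog n)) * card (coins V r)" by simp
  also have "\<dots> < 2 ^ r * card (coins V r)"
  proof (rule mult_strict_right_mono)
    have "3 * (n * 2 ^ (c * clog n)) < 4 * n * 2 ^ (c * clog n)" using n1 by simp
    also have "\<dots> \<le> 4 * n * n * 2 ^ (c * clog n)"
      using mult_le_mono2[OF n1, of "4 * n * 2 ^ (c * clog n)"] by (simp add: algebra_simps)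
    finally show "3 * (n * 2 ^ (c * clog n)) < 2 ^ r"
      using coin_bits_large[OF n1, of c] unfolding r_def by linarith
    show "0 < card (coins V r)" using card_coins[OF V] by simp
  qed
  finally have "3 * card ?accepting < card (coins V r)" by simp
  then show ?thesis unfolding acc_prob_def n_def[symmetric] r_def[symmetric] by (simp add: field_simps)
qed

theorem mainTheorem5:
  fixes c \<kappa> :: nat
  shows "\<exists>L. in_dAM (seteq_dom c \<kappa>) (seteq_lang c \<kappa>) L \<and>
             (\<exists>C. \<forall>n. L n \<le> C * (clog n + 1))"
proof (intro exI conjI)
  show "in_dAM (seteq_dom c \<kappa>) (seteq_lang c \<kappa>) (label_bits c \<kappa>)"
    unfolding in_dAM_def
  proof (intro exI[of _ "coin_bits c"] exI[of _ "seteq_decider c \<kappa>"] conjI)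
    show "\<forall>n. coin_bits c n \<le> label_bits c \<kappa> n" by (simp add: label_bits_def)
  qed (use seteq_complete seteq_sound in blast)+
  show "\<forall>n. label_bits c \<kappa> n \<le> (5 * c + \<kappa> + 13) * (clog n + 1)" using label_bits_le by blast
qed

end
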